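(* Let $N\ge 0$ be an integer and let $a,b,c,z$ be complex numbers (or indeterminates) with $z\neq 0$, such that all denominators below are nonzero. Then \[ {}_{2}F_{1}^{[N]}\left(\begin{matrix}a,b\\ c\end{matrix};z\right) =\frac{(a)_{N} (c-a)_{N}}{(c)_{N}\, N!} \sum_{n=0}^{N}\frac{(1+n)_{N-n}}{(a+n)_{N-n}}\,\frac{(1+N-n)_{n}}{(c-a+N-n)_{n}}\, \frac{(b+Nz^{-1}-n)_{n}}{(Nz^{-1}-n)_{n}}. \]
   Context: For a number $x$ and an integer $m\ge 0$, $(x)_m=x(x+1)\cdots(x+m-1)$ denotes the rising factorial, with $(x)_0=1$. For an integer $N\ge 0$ the truncated hypergeometric function is defined by \[ {}_{2}F_{1}^{[N]}\left(\begin{matrix}a,b\\ c\end{matrix};z\right)=\sum_{m=0}^{N}\frac{(a)_m(b)_m}{(c)_m\, m!}\,\frac{(N+1-m)_m}{(Nz^{-1}-m)_m}. \] *)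

theory Defs
  imports "HOL-Analysis.Analysis"
begin

definition trunc_hyp2F1 :: "nat \<Rightarrow> complex \<Rightarrow> complex \<Rightarrow> complex \<Rightarrow> complex \<Rightarrow> complex" where
  "trunc_hyp2F1 N a b c z =
     (\<Sum>m = 0..N. pochhammer a m * pochhammer b m / (pochhammer c m * fact m)
        * (pochhammer (of_nat (N + 1 - m)) m / pochhammer (of_nat N / z - of_nat m) m))"

end

theory Submission
  imports Defs
begin

(* Put w = N/z and T k = (b)_k / (w - k)_k.  Since (N + 1 - m)_m / m! = C(N,m), the left-hand side
   is the sum over k of C(N,k) (a)_k / (c)_k T k.  On the right, (a)_N / (a + n)_(N-n) = (a)_n and
   (c - a)_N / (c - a + N - n)_n = (c - a)_(N-n), while the Chu-Vandermonde identity
   (b + (w - n))_n = sum_k C(n,k) (b)_k (w - n)_(n-k) turns (b + w - n)_n / (w - n)_n into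
   sum_(k<=n) C(n,k) T k.  After exchanging the sums, the coefficient of T k on the right is
   C(N,k) (a)_k sum_j C(N-k,j) (a + k)_j (c - a)_(N-k-j), which is C(N,k) (a)_k (c + k)_(N-k)
   by Chu-Vandermonde again, and (c + k)_(N-k) = (c)_N / (c)_k. *)

lemma pochhammer_one_plus_of_nat_eq_fact_div:
  fixes n N :: nat
  assumes "n \<le> N"
  shows "pochhammer (1 + of_nat n :: 'a::field_char_0) (N - n) = fact N / fact n"
proof -
  have "(fact N :: 'a) = fact n * pochhammer (1 + of_nat n) (N - n)"
    using pochhammer_product[OF assms, of "1::'a"] by (simp add: pochhammer_fact add.commute)
  then show ?thesis by (simp add: field_simps)
qed

lemma pochhammer_binomial_quotient:
  fixes b w :: "'a::field"
  assumes "pochhammer (w - of_nat n) n \<noteq> 0"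
  shows "pochhammer (b + w - of_nat n) n / pochhammer (w - of_nat n) n
       = (\<Sum>k\<le>n. of_nat (n choose k) * (pochhammer b k / pochhammer (w - of_nat k) k))"
proof -
  have split: "pochhammer (w - of_nat n) n
      = pochhammer (w - of_nat n) (n - k) * pochhammer (w - of_nat k) k" if "k \<le> n" for k
    using pochhammer_product[of "n - k" n "w - of_nat n"] that by (simp add: of_nat_diff)
  have "pochhammer (b + w - of_nat n) n
      = (\<Sum>k\<le>n. of_nat (n choose k) * pochhammer b k * pochhammer (w - of_nat n) (n - k))"
    using pochhammer_binomial_sum[of b "w - of_nat n" n] by (simp add: add_diff_eq)
  then have "pochhammer (b + w - of_nat n) n / pochhammer (w - of_nat n) n
      = (\<Sum>k\<le>n. of_nat (n choose k) * pochhammer b k * pochhammer (w - of_nat n) (n - k)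
                  / pochhammer (w - of_nat n) n)"
    by (simp add: sum_divide_distrib)
  also have "\<dots> = (\<Sum>k\<le>n. of_nat (n choose k) * (pochhammer b k / pochhammer (w - of_nat k) k))"
    using assms split by (intro sum.cong refl) (simp add: field_simps)
  finally show ?thesis .
qed

lemma sum_choose_choose_pochhammer:
  fixes a d :: "'a::comm_ring_1"
  assumes "k \<le> N"
  shows "(\<Sum>n\<le>N. of_nat (N choose n) * of_nat (n choose k) * pochhammer a n * pochhammer d (N - n))
       = of_nat (N choose k) * pochhammer a k * pochhammer (a + of_nat k + d) (N - k)"
proof -
  let ?f = "\<lambda>n. of_nat (N choose n) * of_nat (n choose k) * pochhammer a n * pochhammer d (N - n) :: 'a"
  have "sum ?f {..N} = sum ?f {k..N}"
    by (intro sum.mono_neutral_right) (auto simp: binomial_eq_0)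
  also have "\<dots> = sum ?f {0 + k..(N - k) + k}"
    using assms by simp
  also have "\<dots> = (\<Sum>j\<le>N - k. ?f (j + k))"
    by (simp only: sum.shift_bounds_cl_nat_ivl atLeast0AtMost)
  also have "\<dots> = (\<Sum>j\<le>N - k. of_nat (N choose k) * pochhammer a k *
                    (of_nat ((N - k) choose j) * pochhammer (a + of_nat k) j * pochhammer d (N - k - j)))"
  proof (rule sum.cong[OF refl])
    fix j assume "j \<in> {..N - k}"
    then have "(N choose (j + k)) * ((j + k) choose k) = (N choose k) * ((N - k) choose j)"
      using choose_mult[of k "j + k" N] assms by auto
    then have "(of_nat (N choose (j + k)) :: 'a) * of_nat ((j + k) choose k)
             = of_nat (N choose k) * of_nat ((N - k) choose j)"
      by (metis of_nat_mult)
    then show "?f (j + k) = of_nat (N choose k) * pochhammer a k *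
          (of_nat ((N - k) choose j) * pochhammer (a + of_nat k) j * pochhammer d (N - k - j))"
      using pochhammer_product'[of a k j] by (simp add: add.commute algebra_simps)
  qed
  also have "\<dots> = of_nat (N choose k) * pochhammer a k * pochhammer (a + of_nat k + d) (N - k)"
    by (simp add: sum_distrib_left[symmetric] pochhammer_binomial_sum)
  finally show ?thesis .
qed

lemma pochhammer_binomial_transform:
  fixes a c :: "'a::field" and T :: "nat \<Rightarrow> 'a"
  assumes "pochhammer c N \<noteq> 0"
  shows "pochhammer c N * (\<Sum>k\<le>N. of_nat (N choose k) * (pochhammer a k / pochhammer c k) * T k)
       = (\<Sum>n\<le>N. of_nat (N choose n) * pochhammer a n * pochhammer (c - a) (N - n)
                     * (\<Sum>k\<le>n. of_nat (n choose k) * T k))"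
proof -
  have "(\<Sum>n\<le>N. of_nat (N choose n) * pochhammer a n * pochhammer (c - a) (N - n)
                     * (\<Sum>k\<le>n. of_nat (n choose k) * T k))
      = (\<Sum>n\<le>N. \<Sum>k\<le>N. of_nat (N choose n) * of_nat (n choose k) * pochhammer a n
                     * pochhammer (c - a) (N - n) * T k)"
  proof (intro sum.cong refl)
    fix n assume "n \<in> {..N}"
    then have "(\<Sum>k\<le>n. of_nat (n choose k) * T k) = (\<Sum>k\<le>N. of_nat (n choose k) * T k)"
      by (intro sum.mono_neutral_left) (auto simp: binomial_eq_0)
    then show "of_nat (N choose n) * pochhammer a n * pochhammer (c - a) (N - n)
                 * (\<Sum>k\<le>n. of_nat (n choose k) * T k)
             = (\<Sum>k\<le>N. of_nat (N choose n) * of_nat (n choose k) * pochhammer a n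
                 * pochhammer (c - a) (N - n) * T k)"
      by (simp add: sum_distrib_left mult_ac)
  qed
  also have "\<dots> = (\<Sum>k\<le>N. of_nat (N choose k) * pochhammer a k * pochhammer (c + of_nat k) (N - k) * T k)"
  proof (subst sum.swap, intro sum.cong refl)
    fix k assume "k \<in> {..N}"
    then have "(\<Sum>n\<le>N. of_nat (N choose n) * of_nat (n choose k) * pochhammer a n
                 * pochhammer (c - a) (N - n))
             = of_nat (N choose k) * pochhammer a k * pochhammer (c + of_nat k) (N - k)"
      using sum_choose_choose_pochhammer[of k N a "c - a"] by (simp add: algebra_simps)
    then show "(\<Sum>n\<le>N. of_nat (N choose n) * of_nat (n choose k) * pochhammer a n
                 * pochhammer (c - a) (N - n) * T k)
             = of_nat (N choose k) * pochhammer a k * pochhammer (c + of_nat k) (N - k) * T k"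
      by (simp add: sum_distrib_right[symmetric])
  qed
  also have "\<dots> = pochhammer c N * (\<Sum>k\<le>N. of_nat (N choose k) * (pochhammer a k / pochhammer c k) * T k)"
    unfolding sum_distrib_left
  proof (intro sum.cong refl)
    fix k assume "k \<in> {..N}"
    then have split: "pochhammer c N = pochhammer c k * pochhammer (c + of_nat k) (N - k)"
      by (simp add: pochhammer_product)
    with assms have "pochhammer c k \<noteq> 0" by auto
    then show "of_nat (N choose k) * pochhammer a k * pochhammer (c + of_nat k) (N - k) * T k
        = pochhammer c N * (of_nat (N choose k) * (pochhammer a k / pochhammer c k) * T k)"
      unfolding split by (simp add: field_simps)
  qed
  finally show ?thesis ..
qed

lemma trunc_hyp2F1_eq_binomial_sum:
  "trunc_hyp2F1 N a b c z
     = (\<Sum>m\<le>N. of_nat (N choose m) * (pochhammer a m / pochhammer c m)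
                 * (pochhammer b m / pochhammer (of_nat N / z - of_nat m) m))"
  unfolding trunc_hyp2F1_def atLeast0AtMost
proof (intro sum.cong refl)
  fix m assume "m \<in> {..N}"
  then have "m \<le> N" by simp
  have "pochhammer (1 + of_nat (N - m)) (N - (N - m)) = (fact N / fact (N - m) :: complex)"
    by (rule pochhammer_one_plus_of_nat_eq_fact_div) simp
  then have "pochhammer (of_nat (N + 1 - m)) m = (fact N / fact (N - m) :: complex)"
    using \<open>m \<le> N\<close> by (simp add: Suc_diff_le del: of_nat_diff)
  then show "pochhammer a m * pochhammer b m / (pochhammer c m * fact m) *
      (pochhammer (of_nat (N + 1 - m)) m / pochhammer (of_nat N / z - of_nat m) m)
    = of_nat (N choose m) * (pochhammer a m / pochhammer c m)
      * (pochhammer b m / pochhammer (of_nat N / z - of_nat m) m)"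
    by (simp add: binomial_fact[OF \<open>m \<le> N\<close>] mult_ac)
qed

lemma pochhammer_ratios_eq_binomial:
  fixes a d :: "'a::field_char_0"
  assumes "n \<le> N"
    and "pochhammer (a + of_nat n) (N - n) \<noteq> 0"
    and "pochhammer (d + of_nat (N - n)) n \<noteq> 0"
  shows "pochhammer a N * pochhammer d N / fact N
           * (pochhammer (1 + of_nat n) (N - n) / pochhammer (a + of_nat n) (N - n)
              * (pochhammer (1 + of_nat (N - n)) n / pochhammer (d + of_nat (N - n)) n))
         = of_nat (N choose n) * pochhammer a n * pochhammer d (N - n)"
proof -
  have split_a: "pochhammer a N = pochhammer a n * pochhammer (a + of_nat n) (N - n)"
    and split_d: "pochhammer d N = pochhammer d (N - n) * pochhammer (d + of_nat (N - n)) n"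
    using pochhammer_product[of n N a] pochhammer_product[of "N - n" N d] assms(1) by simp_all
  have fact_n: "pochhammer (1 + of_nat n) (N - n) = (fact N / fact n :: 'a)"
    and fact_Nn: "pochhammer (1 + of_nat (N - n)) n = (fact N / fact (N - n) :: 'a)"
    using pochhammer_one_plus_of_nat_eq_fact_div[of n N] pochhammer_one_plus_of_nat_eq_fact_div[of "N - n" N] assms(1)
    by simp_all
  show ?thesis
    unfolding split_a split_d fact_n fact_Nn binomial_fact[OF assms(1)]
    using assms(2,3) by (simp add: field_simps)
qed

theorem theorem3p4:
  fixes N :: nat and a b c z :: complex
  assumes hz: "z \<noteq> 0"
    and hc: "\<And>m. m \<le> N \<Longrightarrow> pochhammer c m \<noteq> 0"
    and hzd: "\<And>m. m \<le> N \<Longrightarrow> pochhammer (of_nat N / z - of_nat m) m \<noteq> 0"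
    and ha: "\<And>n. n \<le> N \<Longrightarrow> pochhammer (a + of_nat n) (N - n) \<noteq> 0"
    and hca: "\<And>n. n \<le> N \<Longrightarrow> pochhammer (c - a + of_nat (N - n)) n \<noteq> 0"
  shows "trunc_hyp2F1 N a b c z =
    pochhammer a N * pochhammer (c - a) N / (pochhammer c N * fact N) *
    (\<Sum>n = 0..N. pochhammer (1 + of_nat n) (N - n) / pochhammer (a + of_nat n) (N - n)
       * (pochhammer (1 + of_nat (N - n)) n / pochhammer (c - a + of_nat (N - n)) n)
       * (pochhammer (b + of_nat N / z - of_nat n) n / pochhammer (of_nat N / z - of_nat n) n))"
proof -
  define w where "w = of_nat N / z"
  define T where "T k = pochhammer b k / pochhammer (w - of_nat k) k" for k
  define Q where "Q n = pochhammer (b + w - of_nat n) n / pochhammer (w - of_nat n) n" for n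
  have hcN: "pochhammer c N \<noteq> 0"
    using hc by simp
  have "trunc_hyp2F1 N a b c z
      = (\<Sum>k\<le>N. of_nat (N choose k) * (pochhammer a k / pochhammer c k) * T k)"
    unfolding trunc_hyp2F1_eq_binomial_sum T_def w_def ..
  also have "\<dots> = (\<Sum>n\<le>N. of_nat (N choose n) * pochhammer a n * pochhammer (c - a) (N - n)
                      * (\<Sum>k\<le>n. of_nat (n choose k) * T k)) / pochhammer c N"
    using pochhammer_binomial_transform[OF hcN, of a T] hcN
    by (simp add: nonzero_eq_divide_eq mult.commute)
  also have "\<dots> = (\<Sum>n\<le>N. of_nat (N choose n) * pochhammer a n * pochhammer (c - a) (N - n)
                      * Q n) / pochhammer c N"
    using hzd unfolding T_def Q_def w_def by (simp add: pochhammer_binomial_quotient)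
  finally have lhs: "trunc_hyp2F1 N a b c z = (\<Sum>n\<le>N. of_nat (N choose n) * pochhammer a n
                      * pochhammer (c - a) (N - n) * Q n) / pochhammer c N" .
  have summand: "of_nat (N choose n) * pochhammer a n * pochhammer (c - a) (N - n) * Q n / pochhammer c N
      = pochhammer a N * pochhammer (c - a) N / (pochhammer c N * fact N)
        * (pochhammer (1 + of_nat n) (N - n) / pochhammer (a + of_nat n) (N - n)
           * (pochhammer (1 + of_nat (N - n)) n / pochhammer (c - a + of_nat (N - n)) n)
           * (pochhammer (b + of_nat N / z - of_nat n) n / pochhammer (of_nat N / z - of_nat n) n))"
    if "n \<le> N" for n
    using pochhammer_ratios_eq_binomial[OF that ha[OF that] hca[OF that]]
    unfolding Q_def w_def by (simp add: divide_inverse mult_ac)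
  show ?thesis
    unfolding lhs sum_distrib_left atLeast0AtMost sum_divide_distrib
    by (intro sum.cong refl) (simp add: summand)
qed

end
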